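(* There exist universal positive constants $\alpha,\beta,\gamma$ such that the following holds. Let $n\ge 2$, $K\in T^n$, $r\in(0,1)$ and $\varepsilon\in(0,1/25)$, and assume that \begin{itemize} \item $rD_n\subseteq K$, and \item $(1-\varepsilon)D_n\subseteq K+2\sqrt{\varepsilon}\,D_n$. \end{itemize} Then there exist a number $N\le \alpha+\beta|\log\varepsilon|+\gamma|\log r|$ and directions $u_1,\dots,u_N\in S^{n-1}$ such that $\tilde K:=M_{u_N}\circ\cdots\circ M_{u_1}(K)$ satisfies \[ (1-4\sqrt{\varepsilon})D_n\subseteq \tilde K . \]
   Context: $D_n$ denotes the closed Euclidean unit ball in $\mathbb R^n$, $S^{n-1}$ the unit sphere, and $+$ the Minkowski sum. A nonempty compact set $K\subset\mathbb R^n$ is called star shaped if $x\in K$ implies that the segment $[0,x]\subseteq K$; $T^n$ denotes the family of star shaped sets in $\mathbb R^n$. For $u\in S^{n-1}$, $R_u$ denotes the reflection with respect to the hyperplane $u^\perp$, and the Minkowski symmetrization of a set $K$ in direction $u$ is $M_u(K)=\frac{K+R_uK}{2}$ ($K$ need not be convex). *)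

theory Defs
  imports "HOL-Analysis.Analysis"
begin

text \<open>Points of R^n are represented as functions nat => real vanishing at
  all indices >= n; this lets the dimension n be quantified inside the
  statement (the constants alpha, beta, gamma must not depend on n).\<close>

type_synonym pt = "nat \<Rightarrow> real"

definition Rn :: "nat \<Rightarrow> pt set" where
  "Rn n = {x. \<forall>i\<ge>n. x i = 0}"

definition vadd :: "pt \<Rightarrow> pt \<Rightarrow> pt" where
  "vadd x y = (\<lambda>i. x i + y i)"

definition vsub :: "pt \<Rightarrow> pt \<Rightarrow> pt" where
  "vsub x y = (\<lambda>i. x i - y i)"

definition smul :: "real \<Rightarrow> pt \<Rightarrow> pt" where
  "smul c x = (\<lambda>i. c * x i)"

definition ip :: "nat \<Rightarrow> pt \<Rightarrow> pt \<Rightarrow> real" where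
  "ip n x y = (\<Sum>i<n. x i * y i)"

definition nrm :: "nat \<Rightarrow> pt \<Rightarrow> real" where
  "nrm n x = sqrt (ip n x x)"

definition Dball :: "nat \<Rightarrow> pt set" where
  "Dball n = {x \<in> Rn n. nrm n x \<le> 1}"

definition Sph :: "nat \<Rightarrow> pt set" where
  "Sph n = {u \<in> Rn n. nrm n u = 1}"

definition dil :: "real \<Rightarrow> pt set \<Rightarrow> pt set" where
  "dil c A = smul c ` A"

definition msum :: "pt set \<Rightarrow> pt set \<Rightarrow> pt set" where
  "msum A B = {vadd a b | a b. a \<in> A \<and> b \<in> B}"

definition compact_Rn :: "nat \<Rightarrow> pt set \<Rightarrow> bool" where
  "compact_Rn n K \<longleftrightarrow> K \<subseteq> Rn n \<and>
     (\<forall>x :: nat \<Rightarrow> pt. (\<forall>k. x k \<in> K) \<longrightarrow>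
        (\<exists>\<phi> y. strict_mono \<phi> \<and> y \<in> K \<and>
               (\<lambda>k. nrm n (vsub (x (\<phi> k)) y)) \<longlonglongrightarrow> 0))"

definition star_shaped :: "nat \<Rightarrow> pt set \<Rightarrow> bool" where
  "star_shaped n K \<longleftrightarrow> K \<noteq> {} \<and> compact_Rn n K \<and>
     (\<forall>x\<in>K. \<forall>t\<in>{0..1}. smul t x \<in> K)"

definition refl :: "nat \<Rightarrow> pt \<Rightarrow> pt \<Rightarrow> pt" where
  "refl n u x = vsub x (smul (2 * ip n x u) u)"

definition Msym :: "nat \<Rightarrow> pt \<Rightarrow> pt set \<Rightarrow> pt set" where
  "Msym n u K = dil (1/2) (msum K (refl n u ` K))"

fun Msyms :: "nat \<Rightarrow> (nat \<Rightarrow> pt) \<Rightarrow> nat \<Rightarrow> pt set \<Rightarrow> pt set" where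
  "Msyms n us 0 K = K"
| "Msyms n us (Suc k) K = Msym n (us k) (Msyms n us k K)"

end

theory Submission imports Defs begin

text \<open>All symmetrizations are taken in the single direction \<open>e\<^sub>0\<close>.  Write \<open>s = 1 - \<epsilon>\<close> and
  \<open>c = 2\<surd>\<epsilon>/s\<close>; the second hypothesis says that every \<open>y\<close> with \<open>|y| \<le> s\<close> lies within \<open>c|y|\<close>
  of \<open>K\<close> (using that \<open>K\<close> is star shaped), and this property is inherited by \<open>M(K)\<close>.
  If moreover \<open>\<rho>D\<^sub>n \<subseteq> K\<close>, then any \<open>x\<close> with \<open>|x| \<le> \<rho>'\<close> is \<open>(a + R b)/2\<close> where \<open>a \<in> K\<close> approximates
  \<open>\<mu>x\<close> and \<open>b = R(2x - a)\<close> has norm at most \<open>(2 - \<mu> + c\<mu>)\<rho>'\<close>.  Taking \<open>\<mu> = 2\<close>, the inner ball grows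
  by the factor \<open>1/(2c) \<ge> 6/5\<close> until its radius is \<open>s/2\<close>, which takes \<open>O(|log r|)\<close> steps; taking
  \<open>\<mu> = s/\<rho>'\<close> afterwards, the gap between the radius and \<open>(1 - c)s = 1 - \<epsilon> - 2\<surd>\<epsilon>\<close> halves in
  each step, and \<open>O(|log \<epsilon>|)\<close> further steps bring it below \<open>\<surd>\<epsilon>/2\<close>.\<close>

lemma nrm_eq_L2_set: "nrm n x = L2_set x {..<n}"
  by (simp add: nrm_def ip_def L2_set_def power2_eq_square)

lemma nrm_nonneg: "0 \<le> nrm n x"
  by (simp add: nrm_eq_L2_set)

lemma nrm_triangle: "nrm n (vadd x y) \<le> nrm n x + nrm n y"
  unfolding nrm_eq_L2_set vadd_def by (rule L2_set_triangle_ineq)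

lemma nrm_smul: "nrm n (smul c x) = \<bar>c\<bar> * nrm n x"
proof -
  have "nrm n (smul c x) = L2_set (\<lambda>i. \<bar>c\<bar> * x i) {..<n}"
    unfolding nrm_eq_L2_set smul_def L2_set_def by (simp add: power_mult_distrib)
  also have "\<dots> = \<bar>c\<bar> * nrm n x"
    by (simp add: nrm_eq_L2_set L2_set_right_distrib)
  finally show ?thesis .
qed

definition ball_Rn :: "nat \<Rightarrow> real \<Rightarrow> pt set" where
  "ball_Rn n \<rho> = {y \<in> Rn n. nrm n y \<le> \<rho>}"

lemma ball_Rn_mono: "\<rho> \<le> \<rho>' \<Longrightarrow> ball_Rn n \<rho> \<subseteq> ball_Rn n \<rho>'"
  by (auto simp: ball_Rn_def)

lemma dil_Dball:
  assumes "\<rho> > 0"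
  shows "dil \<rho> (Dball n) = ball_Rn n \<rho>"
proof (intro set_eqI iffI)
  fix y assume "y \<in> dil \<rho> (Dball n)"
  then obtain d where d: "d \<in> Rn n" "nrm n d \<le> 1" "y = smul \<rho> d"
    unfolding dil_def Dball_def by auto
  have "nrm n y = \<rho> * nrm n d" using d assms by (simp add: nrm_smul)
  also have "\<dots> \<le> \<rho>" using d assms by (simp add: mult_left_le)
  finally show "y \<in> ball_Rn n \<rho>" using d by (auto simp: ball_Rn_def Rn_def smul_def)
next
  fix y assume y: "y \<in> ball_Rn n \<rho>"
  let ?d = "smul (1/\<rho>) y"
  have "nrm n ?d \<le> 1" using y assms by (simp add: nrm_smul ball_Rn_def)
  then have "?d \<in> Dball n" using y by (auto simp: Dball_def ball_Rn_def Rn_def smul_def)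
  moreover have "y = smul \<rho> ?d" using assms by (auto simp: smul_def)
  ultimately show "y \<in> dil \<rho> (Dball n)" unfolding dil_def by blast
qed

definition e0 :: pt where
  "e0 = (\<lambda>i. if i = 0 then 1 else 0)"

definition flip0 :: "pt \<Rightarrow> pt" where
  "flip0 x = (\<lambda>i. if i = 0 then - x 0 else x i)"

lemma e0_in_Sph: "n \<ge> 1 \<Longrightarrow> e0 \<in> Sph n"
  by (simp add: Sph_def Rn_def nrm_def ip_def e0_def if_distrib sum.delta cong: if_cong)

lemma refl_e0: "n \<ge> 1 \<Longrightarrow> refl n e0 x = flip0 x"
  by (auto simp: refl_def flip0_def vsub_def smul_def e0_def ip_def if_distrib sum.delta
      cong: if_cong)

lemma flip0_flip0 [simp]: "flip0 (flip0 x) = x"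
  by (auto simp: flip0_def)

lemma nrm_flip0 [simp]: "nrm n (flip0 x) = nrm n x"
  unfolding nrm_eq_L2_set L2_set_def flip0_def by (rule arg_cong[where f=sqrt], rule sum.cong) auto

lemma flip0_Rn: "x \<in> Rn n \<Longrightarrow> flip0 x \<in> Rn n"
  by (auto simp: Rn_def flip0_def)

definition Msym0 :: "pt set \<Rightarrow> pt set" where
  "Msym0 L = {smul (1/2) (vadd a (flip0 b)) | a b. a \<in> L \<and> b \<in> L}"

lemma Msyms_e0: "n \<ge> 1 \<Longrightarrow> Msyms n (\<lambda>_. e0) k K = (Msym0 ^^ k) K"
  by (induction k) (auto simp: Msym_def dil_def msum_def Msym0_def refl_e0)

lemma Msym0_subset_Rn:
  assumes "L \<subseteq> Rn n"
  shows "Msym0 L \<subseteq> Rn n"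
proof
  fix x assume "x \<in> Msym0 L"
  then obtain a b where "a \<in> Rn n" "b \<in> Rn n" "x = smul (1/2) (vadd a (flip0 b))"
    using assms unfolding Msym0_def by blast
  then show "x \<in> Rn n" by (simp add: Rn_def smul_def vadd_def flip0_def)
qed

definition rel_dense :: "nat \<Rightarrow> real \<Rightarrow> real \<Rightarrow> pt set \<Rightarrow> bool" where
  "rel_dense n c s L \<longleftrightarrow> (\<forall>y \<in> ball_Rn n s. \<exists>a \<in> L. nrm n (vsub y a) \<le> c * nrm n y)"

lemma rel_dense_Msym0:
  assumes "rel_dense n c s L"
  shows "rel_dense n c s (Msym0 L)"
  unfolding rel_dense_def
proof
  fix y assume y: "y \<in> ball_Rn n s"
  then have "flip0 y \<in> ball_Rn n s" by (simp add: ball_Rn_def flip0_Rn)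
  with y assms obtain a b where
    a: "a \<in> L" "nrm n (vsub y a) \<le> c * nrm n y" and
    b: "b \<in> L" "nrm n (vsub (flip0 y) b) \<le> c * nrm n y"
    unfolding rel_dense_def by (metis nrm_flip0)
  let ?x = "smul (1/2) (vadd a (flip0 b))"
  have "vsub y ?x = smul (1/2) (vadd (vsub y a) (flip0 (vsub (flip0 y) b)))"
    by (auto simp: flip0_def smul_def vadd_def vsub_def field_simps)
  then have "nrm n (vsub y ?x) \<le> c * nrm n y"
    using nrm_triangle[of n "vsub y a" "flip0 (vsub (flip0 y) b)"] a b by (simp add: nrm_smul)
  moreover have "?x \<in> Msym0 L" unfolding Msym0_def using a b by blast
  ultimately show "\<exists>x \<in> Msym0 L. nrm n (vsub y x) \<le> c * nrm n y" by blast
qed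

lemma Msym0_iter_invariants:
  assumes "L \<subseteq> Rn n" "rel_dense n c s L"
  shows "(Msym0 ^^ k) L \<subseteq> Rn n \<and> rel_dense n c s ((Msym0 ^^ k) L)"
  by (induction k) (simp_all add: assms Msym0_subset_Rn rel_dense_Msym0)

lemma ball_Rn_subset_Msym0:
  assumes L: "L \<subseteq> Rn n" and ball: "ball_Rn n \<rho> \<subseteq> L" and dense: "rel_dense n c s L"
    and c: "c \<ge> 0" and \<mu>: "0 \<le> \<mu>" "\<mu> \<le> 2" "\<mu> * \<rho>' \<le> s" "(2 - \<mu> + c * \<mu>) * \<rho>' \<le> \<rho>"
  shows "ball_Rn n \<rho>' \<subseteq> Msym0 L"
proof
  fix x assume x: "x \<in> ball_Rn n \<rho>'"
  define y where "y = smul \<mu> x"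
  have ny: "nrm n y = \<mu> * nrm n x" using \<mu> by (simp add: y_def nrm_smul)
  have "\<mu> * nrm n x \<le> \<mu> * \<rho>'" using x \<mu> by (intro mult_left_mono) (auto simp: ball_Rn_def)
  then have "nrm n y \<le> s" using \<mu> ny by linarith
  then have "y \<in> ball_Rn n s" using x by (simp add: y_def ball_Rn_def Rn_def smul_def)
  then obtain a where a: "a \<in> L" "nrm n (vsub y a) \<le> c * nrm n y"
    using dense unfolding rel_dense_def by blast
  define w where "w = vsub (smul 2 x) a"
  have "w = vadd (smul (2 - \<mu>) x) (vsub y a)"
    unfolding w_def y_def vadd_def vsub_def smul_def by (auto simp: algebra_simps)
  then have "nrm n w \<le> (2 - \<mu> + c * \<mu>) * nrm n x"
    using nrm_triangle[of n "smul (2 - \<mu>) x" "vsub y a"] a \<mu> ny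
    by (simp add: nrm_smul algebra_simps)
  also have "\<dots> \<le> (2 - \<mu> + c * \<mu>) * \<rho>'"
    using x \<mu> c by (intro mult_left_mono) (auto simp: ball_Rn_def)
  finally have "w \<in> ball_Rn n \<rho>"
    using \<mu> x a L by (auto simp: ball_Rn_def w_def Rn_def smul_def vsub_def)
  then have "flip0 w \<in> L" using ball by (auto simp: ball_Rn_def flip0_Rn)
  moreover have "x = smul (1/2) (vadd a (flip0 (flip0 w)))"
    by (simp add: w_def smul_def vadd_def vsub_def)
  ultimately show "x \<in> Msym0 L" unfolding Msym0_def using a by blast
qed

lemma rel_dense_initial:
  assumes star: "\<forall>x\<in>K. \<forall>t\<in>{0..1}. smul t x \<in> K" and zero: "(\<lambda>i. 0) \<in> K"
    and "s > 0" "\<delta> > 0" and approx: "dil s (Dball n) \<subseteq> msum K (dil \<delta> (Dball n))"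
  shows "rel_dense n (\<delta> / s) s K"
  unfolding rel_dense_def
proof
  fix y assume y: "y \<in> ball_Rn n s"
  show "\<exists>a\<in>K. nrm n (vsub y a) \<le> \<delta> / s * nrm n y"
  proof (cases "nrm n y = 0")
    case True
    with zero show ?thesis by (intro bexI[of _ "\<lambda>i. 0"]) (auto simp: vsub_def)
  next
    case False
    define t where "t = nrm n y / s"
    have t: "0 < t" "t \<le> 1"
      using False nrm_nonneg[of n y] y \<open>s > 0\<close> by (auto simp: t_def ball_Rn_def)
    \<comment> \<open>rescale \<open>y\<close> to the sphere of radius \<open>s\<close>, approximate there, and scale back into \<open>K\<close>\<close>
    define w where "w = smul (1/t) y"
    have "nrm n w = s" using t False \<open>s > 0\<close> by (simp add: w_def nrm_smul t_def nrm_nonneg)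
    then have "w \<in> msum K (dil \<delta> (Dball n))"
      using approx y \<open>s > 0\<close> by (auto simp: dil_Dball ball_Rn_def w_def Rn_def smul_def)
    then obtain k e where ke: "k \<in> K" "e \<in> ball_Rn n \<delta>" "w = vadd k e"
      unfolding msum_def using \<open>\<delta> > 0\<close> by (auto simp: dil_Dball)
    have "vsub y (smul t k) = smul t e"
    proof
      fix i show "vsub y (smul t k) i = smul t e i"
        using fun_cong[OF ke(3), of i] t by (auto simp: w_def smul_def vadd_def vsub_def field_simps)
    qed
    then have "nrm n (vsub y (smul t k)) \<le> t * \<delta>"
      using ke t by (simp add: nrm_smul ball_Rn_def mult_left_mono)
    moreover have "smul t k \<in> K" using star ke t by auto
    ultimately show ?thesis by (metis t_def mult.commute times_divide_eq_left)
  qed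
qed

lemma ball_growth_Msym0:
  assumes L: "L \<subseteq> Rn n" "rel_dense n c s L" and ball: "ball_Rn n \<rho> \<subseteq> L"
    and "0 \<le> s" "0 \<le> \<rho>" "0 \<le> c" "1 \<le> g" "2 * c * g \<le> 1"
  shows "ball_Rn n (min (s/2) (g^k * \<rho>)) \<subseteq> (Msym0 ^^ k) L"
proof (induction k)
  case 0
  show ?case using ball ball_Rn_mono[of "min (s/2) \<rho>" \<rho>] by auto
next
  case (Suc k)
  let ?\<rho> = "min (s/2) (g^k * \<rho>)" and ?\<rho>' = "min (s/2) (g^Suc k * \<rho>)"
  have "2 * c \<le> 2 * c * g" using assms mult_left_mono[of 1 g "2 * c"] by simp
  then have "2 * c \<le> 1" using assms by linarith
  have "2 * c * (g * (g^k * \<rho>)) \<le> g^k * \<rho>"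
    using assms mult_right_mono[of "2 * c * g" 1 "g^k * \<rho>"] by (simp add: algebra_simps)
  moreover have "2 * c * (s/2) \<le> s/2"
    using \<open>2 * c \<le> 1\<close> \<open>0 \<le> s\<close> mult_right_mono[of "2 * c" 1 "s/2"] by simp
  moreover have "2 * c * ?\<rho>' \<le> 2 * c * (s/2)" "2 * c * ?\<rho>' \<le> 2 * c * (g * (g^k * \<rho>))"
    using assms by (intro mult_left_mono; simp)+
  ultimately have "(2 - 2 + c * 2) * ?\<rho>' \<le> ?\<rho>"
    by (simp add: algebra_simps)
  then show ?case
    using ball_Rn_subset_Msym0[of "(Msym0 ^^ k) L" n ?\<rho> c s 2 ?\<rho>'] Suc
      Msym0_iter_invariants[OF L, of k] assms by auto
qed

lemma ball_gap_halving_Msym0: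
  assumes L: "L \<subseteq> Rn n" "rel_dense n c s L" and ball: "ball_Rn n (s/2) \<subseteq> L"
    and "0 < s" "0 \<le> c" "c \<le> 1/2"
  shows "ball_Rn n ((1 - c) * s - (1/2 - c) * s / 2^j) \<subseteq> (Msym0 ^^ j) L"
proof (induction j)
  case 0
  show ?case using ball by (simp add: algebra_simps)
next
  case (Suc j)
  let ?\<rho> = "(1 - c) * s - (1/2 - c) * s / 2^j"
    and ?\<rho>' = "(1 - c) * s - (1/2 - c) * s / 2^Suc j"
  have "0 \<le> (1/2 - c) * s" using assms by simp
  then have "(1/2 - c) * s / 2^Suc j \<le> (1/2 - c) * s"
    using one_le_power[of "2::real" "Suc j"] by (simp add: divide_le_eq mult_le_cancel_left1)
  moreover have "(1 - c) * s - (1/2 - c) * s = s/2" by (simp add: algebra_simps)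
  ultimately have "s/2 \<le> ?\<rho>'" by linarith
  then have pos: "0 < ?\<rho>'" using \<open>0 < s\<close> by linarith
  define \<mu> where "\<mu> = s / ?\<rho>'"
  have "\<mu> \<le> 2" using pos \<open>s/2 \<le> ?\<rho>'\<close> by (simp add: \<mu>_def divide_le_eq)
  have "\<mu> * ?\<rho>' = s" using pos by (simp add: \<mu>_def)
  have expand: "(2 - m + c * m) * p = 2 * p - m * p + c * (m * p)" for m p :: real
    by (simp add: algebra_simps)
  have "(2 - \<mu> + c * \<mu>) * ?\<rho>' = 2 * ?\<rho>' - s + c * s"
    by (simp only: expand \<open>\<mu> * ?\<rho>' = s\<close>)
  also have "\<dots> = ?\<rho>"
    by (simp add: field_simps)
  finally have "(2 - \<mu> + c * \<mu>) * ?\<rho>' = ?\<rho>" .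
  then show ?case
    using ball_Rn_subset_Msym0[of "(Msym0 ^^ j) L" n ?\<rho> c s \<mu> ?\<rho>'] Suc \<open>\<mu> \<le> 2\<close> \<open>\<mu> * ?\<rho>' = s\<close>
      Msym0_iter_invariants[OF L, of j] pos assms by (auto simp: \<mu>_def)
qed

lemma exists_power_ge:
  fixes a x b :: real
  assumes "1 < a" "1 \<le> x" "1 \<le> b * ln a"
  shows "\<exists>N. x \<le> a ^ N \<and> real N \<le> b * ln x + 1"
proof (intro exI conjI)
  define N where "N = nat \<lceil>ln x / ln a\<rceil>"
  have la: "0 < ln a" using assms by simp
  have lx: "0 \<le> ln x" using assms by simp
  have "ln x / ln a \<le> real N" unfolding N_def by linarith
  then have "ln x \<le> real N * ln a" using la by (simp add: divide_le_eq)
  then show "x \<le> a ^ N"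
    using assms by (simp add: ln_realpow[symmetric])
  have "ln x \<le> b * ln a * ln x" using assms lx mult_right_mono by fastforce
  then have "ln x / ln a \<le> b * ln x" using la by (simp add: divide_le_eq algebra_simps)
  moreover have "real N \<le> ln x / ln a + 1"
    unfolding N_def using la lx by (simp add: of_nat_nat)
  ultimately show "real N \<le> b * ln x + 1" by linarith
qed

lemma ball_Rn_subset_Msym0_iter:
  assumes L: "L \<subseteq> Rn n" "rel_dense n c s L" and ball: "ball_Rn n r \<subseteq> L"
    and "0 < r" "0 < s" "0 \<le> c" "c \<le> 5/12" "s/2 \<le> (6/5)^k * r"
  shows "ball_Rn n ((1 - c) * s - (1/2 - c) * s / 2^j) \<subseteq> (Msym0 ^^ (j + k)) L"
proof -
  have "ball_Rn n (min (s/2) ((6/5)^k * r)) \<subseteq> (Msym0 ^^ k) L"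
    using assms by (intro ball_growth_Msym0) auto
  then have "ball_Rn n (s/2) \<subseteq> (Msym0 ^^ k) L"
    using assms by (simp add: min_def)
  then have "ball_Rn n ((1 - c) * s - (1/2 - c) * s / 2^j) \<subseteq> (Msym0 ^^ j) ((Msym0 ^^ k) L)"
    using Msym0_iter_invariants[OF L, of k] assms by (intro ball_gap_halving_Msym0) auto
  then show ?thesis by (simp add: funpow_add)
qed

lemma halving_radius_bound:
  fixes q :: real
  assumes "0 < q" "q \<le> 1" "1 / 2^j \<le> q"
  shows "1 - 4 * q \<le> (1 - q^2) - 2 * q - ((1 - q^2) / 2 - 2 * q) / 2^j"
proof -
  have "(1 - q^2) / 2 - 2 * q \<le> 1/2"
    using assms(1) zero_le_power2[of q] by (simp add: field_simps)
  then have "((1 - q^2) / 2 - 2 * q) * (1 / 2^j) \<le> (1/2) * q"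
    using assms by (intro mult_mono) auto
  moreover have "q^2 \<le> q"
    using assms by (simp add: power2_eq_square mult_le_cancel_right1)
  moreover have "((1 - q^2) / 2 - 2 * q) / 2^j = ((1 - q^2) / 2 - 2 * q) * (1 / 2^j)"
    by simp
  ultimately show ?thesis
    using assms(1) by linarith
qed

lemma Msym0_iter_contains_ball:
  assumes star: "star_shaped n K" and q: "0 < q" "q < 1/5" and r: "0 < r" "r < 1"
    and inner: "ball_Rn n r \<subseteq> K"
    and approx: "dil (1 - q^2) (Dball n) \<subseteq> msum K (dil (2 * q) (Dball n))"
  shows "\<exists>N. real N \<le> 2 + 2 * ln (1/q) + 6 * ln (1/r) \<and> ball_Rn n (1 - 4 * q) \<subseteq> (Msym0 ^^ N) K"
proof -
  define s where "s = 1 - q^2"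
  define c where "c = 2 * q / s"
  have "q * q < 1/5 * (1/5)"
    using q by (intro mult_strict_mono) auto
  then have s: "24/25 < s" "s \<le> 1"
    by (auto simp: s_def power2_eq_square)
  have c: "0 \<le> c" "c \<le> 5/12" "c * s = 2 * q"
    using q s by (auto simp: c_def field_simps)
  have "K \<subseteq> Rn n" using star by (simp add: star_shaped_def compact_Rn_def)
  have "rel_dense n c s K"
    unfolding c_def
  proof (rule rel_dense_initial)
    show "(\<lambda>i. 0) \<in> K" using inner r by (auto simp: ball_Rn_def Rn_def nrm_def ip_def)
  qed (use star approx q s in \<open>auto simp: star_shaped_def s_def\<close>)
  obtain k where k: "1/r \<le> (6/5)^k" "real k \<le> 6 * ln (1/r) + 1"
    using exists_power_ge[of "6/5" "1/r" 6] r ln_le_minus_one[of "5/6"] by (auto simp: ln_div)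
  obtain j where j: "1/q \<le> 2^j" "real j \<le> 2 * ln (1/q) + 1"
    using exists_power_ge[of 2 "1/q" 2] q ln2_ge_two_thirds by auto
  have "s/2 \<le> (6/5)^k * r"
    using k r s by (simp add: divide_le_eq)
  then have "ball_Rn n ((1 - c) * s - (1/2 - c) * s / 2^j) \<subseteq> (Msym0 ^^ (j + k)) K"
    using ball_Rn_subset_Msym0_iter[OF \<open>K \<subseteq> Rn n\<close> \<open>rel_dense n c s K\<close> inner] r s(1) c(1,2)
    by simp
  moreover have "(1 - c) * s = s - 2 * q" "(1/2 - c) * s = s/2 - 2 * q"
    using c(3) by (simp_all add: algebra_simps)
  moreover have "1 - 4 * q \<le> s - 2 * q - (s/2 - 2 * q) / 2^j"
    unfolding s_def using halving_radius_bound[of q j] j(1) q by (simp add: divide_le_eq mult.commute)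
  ultimately have "ball_Rn n (1 - 4 * q) \<subseteq> (Msym0 ^^ (j + k)) K"
    using ball_Rn_mono by (metis order_trans)
  moreover have "real (j + k) \<le> 2 + 2 * ln (1/q) + 6 * ln (1/r)"
    using j k by simp
  ultimately show ?thesis by blast
qed

theorem lemma2p3:
  shows "\<exists>\<alpha> \<beta> \<gamma> :: real. \<alpha> > 0 \<and> \<beta> > 0 \<and> \<gamma> > 0 \<and>
    (\<forall>n K r \<epsilon>. n \<ge> 2 \<longrightarrow> star_shaped n K \<longrightarrow> 0 < r \<longrightarrow> r < 1 \<longrightarrow>
       0 < \<epsilon> \<longrightarrow> \<epsilon> < 1/25 \<longrightarrow>
       dil r (Dball n) \<subseteq> K \<longrightarrow>
       dil (1 - \<epsilon>) (Dball n) \<subseteq> msum K (dil (2 * sqrt \<epsilon>) (Dball n)) \<longrightarrow>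
       (\<exists>N us. real N \<le> \<alpha> + \<beta> * \<bar>ln \<epsilon>\<bar> + \<gamma> * \<bar>ln r\<bar> \<and>
          (\<forall>i<N. us i \<in> Sph n) \<and>
          dil (1 - 4 * sqrt \<epsilon>) (Dball n) \<subseteq> Msyms n us N K))"
proof (rule exI[of _ 2], rule exI[of _ 1], rule exI[of _ 6], intro conjI allI impI)
  fix n :: nat and K and r \<epsilon> :: real
  assume n: "2 \<le> n" and star: "star_shaped n K" and r: "0 < r" "r < 1"
    and \<epsilon>: "0 < \<epsilon>" "\<epsilon> < 1/25" and inner: "dil r (Dball n) \<subseteq> K"
    and approx: "dil (1 - \<epsilon>) (Dball n) \<subseteq> msum K (dil (2 * sqrt \<epsilon>) (Dball n))"
  define q where "q = sqrt \<epsilon>"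
  have q: "0 < q" "q < 1/5" "\<epsilon> = q^2"
    using \<epsilon> real_sqrt_less_iff[of \<epsilon> "1/25"] by (auto simp: q_def real_sqrt_divide)
  have "1 - \<epsilon> = 1 - q^2" "2 * sqrt \<epsilon> = 2 * q"
    using q(3) by (simp_all add: q_def)
  then obtain N where N: "real N \<le> 2 + 2 * ln (1/q) + 6 * ln (1/r)"
    and ball: "ball_Rn n (1 - 4 * q) \<subseteq> (Msym0 ^^ N) K"
    using Msym0_iter_contains_ball[OF star q(1,2) r] inner approx r by (auto simp: dil_Dball)
  have "\<bar>ln r\<bar> = ln (1/r)" "\<bar>ln \<epsilon>\<bar> = 2 * ln (1/q)"
    using r q \<epsilon> by (simp_all add: ln_div ln_realpow)
  moreover have "dil (1 - 4 * sqrt \<epsilon>) (Dball n) = ball_Rn n (1 - 4 * q)"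
    unfolding q_def[symmetric] using q(2) by (intro dil_Dball) simp
  ultimately show "\<exists>N us. real N \<le> 2 + 1 * \<bar>ln \<epsilon>\<bar> + 6 * \<bar>ln r\<bar> \<and> (\<forall>i<N. us i \<in> Sph n) \<and>
      dil (1 - 4 * sqrt \<epsilon>) (Dball n) \<subseteq> Msyms n us N K"
    using N ball e0_in_Sph[of n] Msyms_e0[of n] n
    by (intro exI[of _ N] exI[of _ "\<lambda>_. e0"]) auto
qed simp_all

end
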